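(* Let $\epsilon>0$ and $n\ge1$. Consider mechanisms $Q:\mathbb{R}^n\to\Delta(\mathbb{R}^n)$ of the form $Qu=u+V$, where the noise $V$ has distribution $g\in\Delta(\mathbb{R}^n)$ independent of the input $u$, and suppose $Q$ is $\epsilon$-Lipschitz private with respect to the $\ell_1$-norm on $\mathbb{R}^n$. Then $$\mathbb{E}_{V\sim g}\|V\|_2^2\;\ge\;\mathbb{E}_{V\sim l_1^n}\|V\|_2^2=\frac{2n}{\epsilon^2},$$ where $l_1^n(v)=\left(\frac{\epsilon}{2}\right)^n e^{-\epsilon\|v\|_1}$; i.e. the Laplace mechanism adding noise with density $l_1^n$ minimizes the mean-squared error for the identity query $q(u)=u$ among all such mechanisms.
   Context: $\Delta(\mathcal{Y})$ denotes the set of Borel probability measures on $\mathcal{Y}$. For a normed space $(\mathcal{U},\|\cdot\|)$, a mechanism $Q:\mathcal{U}\to\Delta(\mathcal{Y})$ is $\epsilon$-Lipschitz private if for all $u,u'\in\mathcal{U}$ and all measurable $\mathcal{S}\subseteq\mathcal{Y}$, $|\ln\mathbb{P}(Qu\in\mathcal{S})-\ln\mathbb{P}(Qu'\in\mathcal{S})|\le\epsilon\|u-u'\|$, equivalently $\mathbb{P}(Qu\in\mathcal{S})\le e^{\epsilon\|u-u'\|}\mathbb{P}(Qu'\in\mathcal{S})$. *)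

theory Defs
  imports "HOL-Probability.Probability"
begin

definition l1_norm :: "real ^ 'n \<Rightarrow> real" where
  "l1_norm x = (\<Sum>i\<in>UNIV. \<bar>x $ i\<bar>)"

definition lipschitz_private ::
  "real \<Rightarrow> ('u::ab_group_add \<Rightarrow> real) \<Rightarrow> 'y measure \<Rightarrow> ('u \<Rightarrow> 'y measure) \<Rightarrow> bool" where
  "lipschitz_private eps nrm Y Q \<longleftrightarrow>
     (\<forall>u u' S. S \<in> sets Y \<longrightarrow> measure (Q u) S \<le> exp (eps * nrm (u - u')) * measure (Q u') S)"

definition additive_mech :: "(real ^ 'n) measure \<Rightarrow> real ^ 'n \<Rightarrow> (real ^ 'n) measure" where
  "additive_mech g u = distr g borel (\<lambda>v. u + v)"

definition laplace_density :: "real \<Rightarrow> real ^ 'n \<Rightarrow> real" where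
  "laplace_density eps v = (eps / 2) ^ CARD('n) * exp (- eps * l1_norm v)"

end

theory Submission
  imports Defs
begin

text \<open>Both second moments split into sums over coordinates, so it suffices to compare
  \<open>E V\<^sub>i\<^sup>2\<close> with the second moment \<open>2/\<epsilon>\<^sup>2\<close> of the one-dimensional Laplace law,
  the Laplace density being a product of one-dimensional ones. Privacy applied to the inputs
  \<open>0\<close> and \<open>\<pm>s\<close> times the \<open>i\<close>-th unit vector, at \<open>\<ell>\<^sub>1\<close>-distance \<open>s\<close>, gives
  \<open>P(V\<^sub>i \<ge> 0) \<le> exp(\<epsilon>s) P(V\<^sub>i \<ge> s)\<close> and \<open>P(V\<^sub>i \<le> 0) \<le> exp(\<epsilon>s) P(V\<^sub>i \<le> -s)\<close>;
  adding them yields \<open>P(|V\<^sub>i| \<ge> s) \<ge> exp(-\<epsilon>s)\<close>, the Laplace tail. Integrating this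
  bound in \<open>E V\<^sub>i\<^sup>2 = \<integral>\<^sub>0\<^sup>\<infinity> 2s P(|V\<^sub>i| \<ge> s) ds\<close> gives \<open>E V\<^sub>i\<^sup>2 \<ge> 2/\<epsilon>\<^sup>2\<close>.\<close>

lemma vec_nth_measurable[measurable (raw)]:
  "f \<in> M \<rightarrow>\<^sub>M (borel :: (real ^ 'n) measure) \<Longrightarrow> (\<lambda>x. f x $ i) \<in> borel_measurable M"
  by (erule measurable_compose) (intro borel_measurable_continuous_onI continuous_intros)

lemma power2_norm_vec: "(norm (v :: real ^ 'n))\<^sup>2 = (\<Sum>i\<in>UNIV. (v $ i)\<^sup>2)"
  unfolding power2_norm_eq_inner inner_vec_def by (simp add: power2_eq_square)

lemma nn_integral_norm_power2_vec:
  fixes M :: "(real ^ 'n) measure"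
  assumes "sets M = sets borel"
  shows "(\<integral>\<^sup>+v. ennreal ((norm v)\<^sup>2) \<partial>M) = (\<Sum>i\<in>UNIV. \<integral>\<^sup>+v. ennreal ((v $ i)\<^sup>2) \<partial>M)"
proof -
  have [measurable_cong]: "sets M = sets borel" by fact
  have "(\<integral>\<^sup>+v. ennreal ((norm v)\<^sup>2) \<partial>M) = (\<integral>\<^sup>+v. (\<Sum>i\<in>UNIV. ennreal ((v $ i)\<^sup>2)) \<partial>M)"
    by (intro nn_integral_cong) (simp add: power2_norm_vec)
  also have "\<dots> = (\<Sum>i\<in>UNIV. \<integral>\<^sup>+v. ennreal ((v $ i)\<^sup>2) \<partial>M)"
    by (rule nn_integral_sum) auto
  finally show ?thesis .
qed

lemma nn_integral_power2_eq_tail: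
  fixes f :: "'a \<Rightarrow> real"
  assumes "sigma_finite_measure M" and [measurable]: "f \<in> borel_measurable M"
  shows "(\<integral>\<^sup>+x. ennreal ((f x)\<^sup>2) \<partial>M)
       = (\<integral>\<^sup>+s. ennreal (2 * s) * emeasure M {x\<in>space M. s \<le> \<bar>f x\<bar>} * indicator {0..} s \<partial>lborel)"
proof -
  interpret pair_sigma_finite M "lborel :: real measure"
    by (intro pair_sigma_finite.intro assms(1) lborel.sigma_finite_measure_axioms)
  define F where "F x s = ennreal (2 * s) * indicator {0..\<bar>f x\<bar>} s" for x s
  have F_measurable: "case_prod F \<in> borel_measurable (M \<Otimes>\<^sub>M lborel)"
    unfolding F_def indicator_def atLeastAtMost_iff by measurable
  have "ennreal ((f x)\<^sup>2) = (\<integral>\<^sup>+s. F x s \<partial>lborel)" for x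
    unfolding F_def
    by (subst nn_integral_FTC_Icc[where F = "\<lambda>s. s\<^sup>2"]) (auto intro!: derivative_eq_intros)
  then have "(\<integral>\<^sup>+x. ennreal ((f x)\<^sup>2) \<partial>M) = (\<integral>\<^sup>+s. (\<integral>\<^sup>+x. F x s \<partial>M) \<partial>lborel)"
    using Fubini'[OF F_measurable] by simp
  also have "\<dots> = (\<integral>\<^sup>+s. ennreal (2 * s) * emeasure M {x\<in>space M. s \<le> \<bar>f x\<bar>} * indicator {0..} s \<partial>lborel)"
  proof (intro nn_integral_cong)
    fix s :: real
    have "(\<integral>\<^sup>+x. F x s \<partial>M)
        = (\<integral>\<^sup>+x. ennreal (2 * s) * indicator {x\<in>space M. s \<le> \<bar>f x\<bar>} x * indicator {0..} s \<partial>M)"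
      by (intro nn_integral_cong) (auto simp: F_def split: split_indicator)
    then show "(\<integral>\<^sup>+x. F x s \<partial>M) = ennreal (2 * s) * emeasure M {x\<in>space M. s \<le> \<bar>f x\<bar>} * indicator {0..} s"
      by (simp add: nn_integral_multc nn_integral_cmult_indicator)
  qed
  finally show ?thesis .
qed

lemma nn_integral_lborel_vec_prod:
  fixes f :: "'n::finite \<Rightarrow> real \<Rightarrow> real"
  assumes [measurable]: "\<And>j. f j \<in> borel_measurable borel" and "\<And>j t. 0 \<le> f j t"
  shows "(\<integral>\<^sup>+v. ennreal (\<Prod>j\<in>UNIV. f j (v $ j)) \<partial>(lborel :: (real ^ 'n) measure))
       = (\<Prod>j\<in>UNIV. \<integral>\<^sup>+t. ennreal (f j t) \<partial>lborel)"
proof -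
  have Basis_vec: "(Basis :: (real ^ 'n) set) = (\<lambda>j. axis j 1) ` UNIV"
    unfolding Basis_vec_def by auto
  have inj: "inj (\<lambda>j::'n. axis j (1::real))"
    by (auto simp: inj_on_def axis_eq_axis)
  define h where "h b t = ennreal (f (SOME j. b = axis j 1) t)" for b :: "real ^ 'n" and t
  have h_axis: "h (axis j 1) = (\<lambda>t. ennreal (f j t))" for j
    unfolding h_def by (simp add: axis_eq_axis)
  have "(\<integral>\<^sup>+v. ennreal (\<Prod>j\<in>UNIV. f j (v $ j)) \<partial>(lborel :: (real ^ 'n) measure))
      = (\<integral>\<^sup>+v. (\<Prod>b\<in>Basis. h b (v \<bullet> b)) \<partial>lborel)"
    by (intro nn_integral_cong)
       (simp add: Basis_vec prod.reindex[OF inj] h_axis inner_axis prod_ennreal assms(2))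
  also have "\<dots> = (\<Prod>b\<in>Basis. \<integral>\<^sup>+t. h b t \<partial>lborel)"
    by (rule nn_integral_lborel_prod) (auto simp: Basis_vec h_axis)
  also have "\<dots> = (\<Prod>j\<in>UNIV. \<integral>\<^sup>+t. ennreal (f j t) \<partial>lborel)"
    by (simp add: Basis_vec prod.reindex[OF inj] h_axis)
  finally show ?thesis .
qed

lemma nn_integral_even:
  fixes h :: "real \<Rightarrow> ennreal"
  assumes [measurable]: "h \<in> borel_measurable borel" and even: "\<And>t. h (-t) = h t"
  shows "(\<integral>\<^sup>+t. h t \<partial>lborel) = 2 * (\<integral>\<^sup>+t. h t * indicator {0..} t \<partial>lborel)"
proof -
  have "(\<integral>\<^sup>+t. h t \<partial>lborel)
      = (\<integral>\<^sup>+t. h t * indicator {0..} t + h (-t) * indicator {0..} (-t) \<partial>lborel)"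
    using AE_lborel_singleton[of 0]
    by (intro nn_integral_cong_AE) (auto simp: even split: split_indicator)
  also have "\<dots> = (\<integral>\<^sup>+t. h t * indicator {0..} t \<partial>lborel) + (\<integral>\<^sup>+t. h (-t) * indicator {0..} (-t) \<partial>lborel)"
    by (rule nn_integral_add) auto
  also have "(\<integral>\<^sup>+t. h (-t) * indicator {0..} (-t) \<partial>lborel)
      = (\<integral>\<^sup>+t. h t * indicator {0..} t \<partial>distr lborel borel uminus)"
    by (subst nn_integral_distr) auto
  also have "\<dots> = (\<integral>\<^sup>+t. h t * indicator {0..} t \<partial>lborel)"
    by (simp add: lborel_distr_uminus)
  finally show ?thesis by (simp add: mult_2)
qed

lemma nn_integral_exponential_moment:
  assumes "eps > 0"
  shows "(\<integral>\<^sup>+t. ennreal (eps * exp (- eps * t) * t ^ k) * indicator {0..} t \<partial>lborel) = fact k / eps ^ k"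
proof -
  have "(\<integral>\<^sup>+t. ennreal (eps * exp (- eps * t) * t ^ k) * indicator {0..} t \<partial>lborel)
      = (\<integral>\<^sup>+t. ennreal (erlang_density 0 eps t * t ^ k) \<partial>lborel)"
    by (intro nn_integral_cong) (auto simp: erlang_density_def split: split_indicator)
  then show ?thesis
    using nn_integral_erlang_ith_moment[OF assms, of 0 k] by simp
qed

lemma nn_integral_laplace_moment:
  assumes "eps > 0" and "even k"
  shows "(\<integral>\<^sup>+t. ennreal (eps / 2 * exp (- eps * \<bar>t\<bar>) * t ^ k) \<partial>lborel) = fact k / eps ^ k"
proof -
  have "(\<integral>\<^sup>+t. ennreal (eps / 2 * exp (- eps * \<bar>t\<bar>) * t ^ k) \<partial>lborel)
      = 2 * (\<integral>\<^sup>+t. ennreal (eps / 2 * exp (- eps * \<bar>t\<bar>) * t ^ k) * indicator {0..} t \<partial>lborel)"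
    by (rule nn_integral_even) (auto simp: \<open>even k\<close>)
  also have "\<dots> = (\<integral>\<^sup>+t. 2 * (ennreal (eps / 2 * exp (- eps * \<bar>t\<bar>) * t ^ k) * indicator {0..} t) \<partial>lborel)"
    by (rule nn_integral_cmult[symmetric]) auto
  also have "\<dots> = (\<integral>\<^sup>+t. ennreal (eps * exp (- eps * t) * t ^ k) * indicator {0..} t \<partial>lborel)"
  proof (intro nn_integral_cong)
    have twice_half: "2 * ennreal (a / 2) = ennreal a" if "0 \<le> a" for a :: real
      using that ennreal_mult[of 2 "a / 2"] by simp
    fix t :: real
    show "2 * (ennreal (eps / 2 * exp (- eps * \<bar>t\<bar>) * t ^ k) * indicator {0..} t)
        = ennreal (eps * exp (- eps * t) * t ^ k) * indicator {0..} t"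
      using twice_half[of "eps * exp (- eps * t) * t ^ k"] \<open>eps > 0\<close>
      by (auto simp: mult.assoc split: split_indicator)
  qed
  also have "\<dots> = fact k / eps ^ k"
    by (rule nn_integral_exponential_moment[OF \<open>eps > 0\<close>])
  finally show ?thesis .
qed

lemma laplace_density_nonneg: "eps > 0 \<Longrightarrow> 0 \<le> laplace_density eps v"
  unfolding laplace_density_def by simp

lemma laplace_density_prod:
  "laplace_density eps (v :: real ^ 'n) = (\<Prod>j\<in>UNIV. eps / 2 * exp (- eps * \<bar>v $ j\<bar>))"
proof -
  have "(\<Prod>j\<in>UNIV. eps / 2 * exp (- eps * \<bar>v $ j\<bar>)) = (eps / 2) ^ CARD('n) * exp (\<Sum>j\<in>UNIV. - eps * \<bar>v $ j\<bar>)"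
    by (simp only: prod.distrib prod_constant exp_sum[OF finite_class.finite_UNIV])
  then show ?thesis
    by (simp add: laplace_density_def l1_norm_def sum_distrib_left sum_negf)
qed

lemma nn_integral_laplace_coord_power2:
  fixes i :: "'n::finite"
  assumes "eps > 0"
  shows "(\<integral>\<^sup>+v. ennreal ((v $ i)\<^sup>2) \<partial>density (lborel :: (real ^ 'n) measure) (\<lambda>v. ennreal (laplace_density eps v)))
       = ennreal (2 / eps\<^sup>2)"
proof -
  define f where "f j t = eps / 2 * exp (- eps * \<bar>t\<bar>) * t ^ (if j = i then 2 else 0)" for j t
  have "laplace_density eps v * (v $ i)\<^sup>2 = (\<Prod>j\<in>UNIV. f j (v $ j))" for v :: "real ^ 'n"
  proof -
    have "(\<Prod>j\<in>UNIV. f j (v $ j))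
        = laplace_density eps v * (\<Prod>j\<in>UNIV. if j = i then (v $ j)\<^sup>2 else 1)"
      unfolding f_def laplace_density_prod prod.distrib[symmetric] by (intro prod.cong) auto
    then show ?thesis by simp
  qed
  then have "(\<integral>\<^sup>+v. ennreal ((v $ i)\<^sup>2) \<partial>density lborel (\<lambda>v. ennreal (laplace_density eps v)))
      = (\<integral>\<^sup>+v. ennreal (\<Prod>j\<in>UNIV. f j (v $ j)) \<partial>(lborel :: (real ^ 'n) measure))"
    using \<open>eps > 0\<close>
    by (subst nn_integral_density)
       (auto simp: laplace_density_def l1_norm_def ennreal_mult'[symmetric] laplace_density_nonneg)
  also have "\<dots> = (\<Prod>j\<in>UNIV. \<integral>\<^sup>+t. ennreal (f j t) \<partial>lborel)"
    using \<open>eps > 0\<close> by (intro nn_integral_lborel_vec_prod) (auto simp: f_def)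
  also have "\<dots> = (\<Prod>j\<in>UNIV. if j = i then ennreal (2 / eps\<^sup>2) else 1)"
    using nn_integral_laplace_moment[OF \<open>eps > 0\<close>, of 2] nn_integral_laplace_moment[OF \<open>eps > 0\<close>, of 0]
    by (intro prod.cong) (auto simp: f_def power2_eq_square)
  finally show ?thesis by simp
qed

lemma measure_additive_mech:
  fixes g :: "(real ^ 'n) measure"
  assumes "sets g = sets borel" and "S \<in> sets borel"
  shows "measure (additive_mech g u) S = measure g {v. u + v \<in> S}"
proof -
  have [measurable_cong]: "sets g = sets borel" by fact
  have "space g = UNIV" using sets_eq_imp_space_eq[OF assms(1)] by simp
  then show ?thesis
    unfolding additive_mech_def using assms(2) by (subst measure_distr) (auto simp: vimage_def)
qed

lemma l1_norm_scaleR_axis: "l1_norm (s *\<^sub>R axis i 1 :: real ^ 'n) = \<bar>s\<bar>"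
proof -
  have "l1_norm (s *\<^sub>R axis i 1 :: real ^ 'n) = (\<Sum>j\<in>UNIV. if j = i then \<bar>s\<bar> else 0)"
    unfolding l1_norm_def by (rule sum.cong) (auto simp: axis_def)
  then show ?thesis by simp
qed

lemma l1_norm_minus: "l1_norm (- x) = l1_norm x"
  unfolding l1_norm_def by simp

lemma lipschitz_private_additive_shift:
  fixes g :: "(real ^ 'n) measure"
  assumes "sets g = sets borel" and "lipschitz_private eps l1_norm borel (additive_mech g)"
    and "S \<in> sets borel"
  shows "measure g {v. w + v \<in> S} \<le> exp (eps * l1_norm w) * measure g S"
proof -
  have "measure (additive_mech g w) S \<le> exp (eps * l1_norm (w - 0)) * measure (additive_mech g 0) S"
    using assms(2,3) unfolding lipschitz_private_def by blast
  then show ?thesis by (simp add: measure_additive_mech[OF assms(1,3)])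
qed

lemma lipschitz_private_additive_coord_tail:
  fixes g :: "(real ^ 'n) measure"
  assumes "prob_space g" and "sets g = sets borel"
    and priv: "lipschitz_private eps l1_norm borel (additive_mech g)" and "0 \<le> s"
  shows "exp (- eps * s) \<le> measure g {v. s \<le> \<bar>v $ i\<bar>}"
proof (cases "s = 0")
  case True
  interpret prob_space g by fact
  have "space g = UNIV" using sets_eq_imp_space_eq[OF assms(2)] by simp
  then show ?thesis using True prob_space by simp
next
  case False
  interpret prob_space g by fact
  have space: "space g = UNIV" using sets_eq_imp_space_eq[OF assms(2)] by simp
  have borel_ge: "{v. a \<le> v $ i} \<in> sets borel" for a :: real by measurable
  have borel_le: "{v. v $ i \<le> a} \<in> sets borel" for a :: real by measurable
  have halfspaces: "{v. a \<le> v $ i} \<in> sets g" "{v. v $ i \<le> a} \<in> sets g" for a :: real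
    using borel_ge borel_le by (simp_all add: assms(2))
  have up: "measure g {v. 0 \<le> v $ i} \<le> exp (eps * s) * measure g {v. s \<le> v $ i}"
    using lipschitz_private_additive_shift[OF assms(2) priv borel_ge[of s], where w = "s *\<^sub>R axis i 1"]
      \<open>0 \<le> s\<close> by (simp add: l1_norm_scaleR_axis)
  have down: "measure g {v. v $ i \<le> 0} \<le> exp (eps * s) * measure g {v. v $ i \<le> -s}"
    using lipschitz_private_additive_shift[OF assms(2) priv borel_le[of "-s"], where w = "(-s) *\<^sub>R axis i 1"]
      \<open>0 \<le> s\<close> by (simp add: l1_norm_scaleR_axis l1_norm_minus)
  have "{v. 0 \<le> v $ i} \<union> {v. v $ i \<le> 0} = space g" using space by auto
  then have "1 = measure g ({v. 0 \<le> v $ i} \<union> {v. v $ i \<le> 0})"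
    by (simp only: prob_space)
  also have "\<dots> \<le> measure g {v. 0 \<le> v $ i} + measure g {v. v $ i \<le> 0}"
    by (intro measure_Un_le halfspaces)
  also have "\<dots> \<le> exp (eps * s) * (measure g {v. s \<le> v $ i} + measure g {v. v $ i \<le> -s})"
    using up down by (simp add: distrib_left)
  also have "measure g {v. s \<le> v $ i} + measure g {v. v $ i \<le> -s} = measure g {v. s \<le> \<bar>v $ i\<bar>}"
  proof -
    have "{v. s \<le> \<bar>v $ i\<bar>} = {v. s \<le> v $ i} \<union> {v. v $ i \<le> -s}" by auto
    then show ?thesis
      using \<open>0 \<le> s\<close> False halfspaces by (simp add: finite_measure_Union disjoint_iff)
  qed
  finally have one_le: "1 \<le> exp (eps * s) * measure g {v. s \<le> \<bar>v $ i\<bar>}" .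
  have "exp (- eps * s) = exp (- eps * s) * 1" by simp
  also have "\<dots> \<le> exp (- eps * s) * (exp (eps * s) * measure g {v. s \<le> \<bar>v $ i\<bar>})"
    using one_le by (rule mult_left_mono) simp
  also have "\<dots> = measure g {v. s \<le> \<bar>v $ i\<bar>}"
    by (simp add: mult.assoc[symmetric] exp_add[symmetric])
  finally show ?thesis .
qed

lemma lipschitz_private_additive_coord_power2:
  fixes g :: "(real ^ 'n) measure"
  assumes "eps > 0" and "prob_space g" and "sets g = sets borel"
    and priv: "lipschitz_private eps l1_norm borel (additive_mech g)"
  shows "ennreal (2 / eps\<^sup>2) \<le> (\<integral>\<^sup>+v. ennreal ((v $ i)\<^sup>2) \<partial>g)"
proof -
  interpret prob_space g by fact
  have [measurable_cong]: "sets g = sets borel" by fact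
  have "ennreal (2 / eps\<^sup>2) = ennreal (2 / eps) * (fact 1 / eps ^ 1)"
    using \<open>eps > 0\<close> by (simp add: ennreal_mult[symmetric] power2_eq_square divide_ennreal)
  also have "\<dots> = ennreal (2 / eps) * (\<integral>\<^sup>+s. ennreal (eps * exp (- eps * s) * s ^ 1) * indicator {0..} s \<partial>lborel)"
    by (simp only: nn_integral_exponential_moment[OF \<open>eps > 0\<close>])
  also have "\<dots> = (\<integral>\<^sup>+s. ennreal (2 / eps) * (ennreal (eps * exp (- eps * s) * s ^ 1) * indicator {0..} s) \<partial>lborel)"
    by (rule nn_integral_cmult[symmetric]) auto
  also have "\<dots> \<le> (\<integral>\<^sup>+s. ennreal (2 * s) * emeasure g {v\<in>space g. s \<le> \<bar>v $ i\<bar>} * indicator {0..} s \<partial>lborel)"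
  proof (intro nn_integral_mono)
    fix s :: real
    show "ennreal (2 / eps) * (ennreal (eps * exp (- eps * s) * s ^ 1) * indicator {0..} s)
        \<le> ennreal (2 * s) * emeasure g {v\<in>space g. s \<le> \<bar>v $ i\<bar>} * indicator {0..} s"
    proof (cases "0 \<le> s")
      case True
      have "ennreal (2 / eps) * ennreal (eps * exp (- eps * s) * s ^ 1) = ennreal (2 * s) * ennreal (exp (- eps * s))"
        using True \<open>eps > 0\<close> by (simp add: ennreal_mult[symmetric])
      also have "\<dots> \<le> ennreal (2 * s) * emeasure g {v\<in>space g. s \<le> \<bar>v $ i\<bar>}"
        using lipschitz_private_additive_coord_tail[OF assms(2,3) priv True, of i]
          sets_eq_imp_space_eq[OF assms(3)]
        by (intro mult_left_mono) (auto simp: emeasure_eq_measure)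
      finally show ?thesis using True by (simp add: mult.assoc)
    qed simp
  qed
  also have "\<dots> = (\<integral>\<^sup>+v. ennreal ((v $ i)\<^sup>2) \<partial>g)"
    by (rule nn_integral_power2_eq_tail[symmetric]) (auto intro: sigma_finite_measure_axioms)
  finally show ?thesis .
qed

theorem theorem2:
  fixes eps :: real and g :: "(real ^ 'n) measure"
  assumes eps_pos: "eps > 0"
    and g_prob: "prob_space g"
    and g_sets: "sets g = sets borel"
    and priv: "lipschitz_private eps l1_norm (borel :: (real ^ 'n) measure) (additive_mech g)"
  shows "(\<integral>\<^sup>+ v. ennreal ((norm v)\<^sup>2) \<partial>g)
           \<ge> (\<integral>\<^sup>+ v. ennreal ((norm v)\<^sup>2) \<partial>(density (lborel :: (real ^ 'n) measure) (\<lambda>v. ennreal (laplace_density eps v))))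
       \<and> (\<integral>\<^sup>+ v. ennreal ((norm v)\<^sup>2) \<partial>(density (lborel :: (real ^ 'n) measure) (\<lambda>v. ennreal (laplace_density eps v))))
           = ennreal (2 * real CARD('n) / eps\<^sup>2)"
proof -
  let ?laplace = "density (lborel :: (real ^ 'n) measure) (\<lambda>v. ennreal (laplace_density eps v))"
  have sum: "(\<Sum>i\<in>(UNIV :: 'n set). ennreal (2 / eps\<^sup>2)) = ennreal (2 * real CARD('n) / eps\<^sup>2)"
    using eps_pos by (simp add: ennreal_of_nat_eq_real_of_nat ennreal_mult[symmetric])
  have laplace: "(\<integral>\<^sup>+v. ennreal ((norm v)\<^sup>2) \<partial>?laplace) = (\<Sum>i\<in>(UNIV :: 'n set). ennreal (2 / eps\<^sup>2))"
    by (simp add: nn_integral_norm_power2_vec nn_integral_laplace_coord_power2[OF eps_pos])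
  have lower: "(\<Sum>i\<in>(UNIV :: 'n set). ennreal (2 / eps\<^sup>2)) \<le> (\<integral>\<^sup>+v. ennreal ((norm v)\<^sup>2) \<partial>g)"
    unfolding nn_integral_norm_power2_vec[OF g_sets]
    by (intro sum_mono lipschitz_private_additive_coord_power2[OF eps_pos g_prob g_sets priv])
  show ?thesis using sum laplace lower by simp
qed

end
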